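(* There is an absolute constant $C>0$ such that the following holds. Let $n,d,k\ge1$, let $\phi:\mathbb{R}\to\mathbb{R}$ be $L$-Lipschitz with $\phi(0)=0$, let $b>0$, and let $x_1,\dots,x_n,x'_1,\dots,x'_n\in\mathbb{R}^d$ satisfy $\|x_i\|_2,\|x'_i\|_2\le b$. For $a>0$ let $\mathcal{G}^k_a=\{A\in\mathbb{R}^{d\times k}:\|A\|_{2,\infty}\le a\}$. Then $$\widehat{\mathfrak{R}}\big(\mathcal{F}_k(\mathcal{G}^k_a)\big)\le C\left(\frac1n+\frac{a^2b^2\sqrt{k}\,L^2}{\sqrt n}\sqrt{\log(2dk)}\,\log\big(2+n\,b^2a^2L^2\big)\right).$$
   Context: For $A\in\mathbb{R}^{d\times k}$ with columns $A_{\cdot 1},\dots,A_{\cdot k}$: $\|A\|_{2,\infty}=\max_{j\le k}\|A_{\cdot j}\|_2$. For $u,v\in\mathbb{R}^k$, $\zeta_k(u,v)=\frac1k\|u-v\|_2^2$. The function $\phi$ is applied coordinatewise to vectors. Given fixed points $x_1,\dots,x_n,x'_1,\dots,x'_n\in\mathbb{R}^d$ and a set $\mathcal{G}\subset\mathbb{R}^{d\times k}$, define $\mathcal{F}_k(\mathcal{G})=\{(\zeta_k(\phi(A^tx_i),\phi(A^tx'_i)))_{i=1}^n : A\in\mathcal{G}\}\subset\mathbb{R}^n$. For a set $\mathcal{F}\subset\mathbb{R}^n$, $\widehat{\mathfrak{R}}(\mathcal{F})=\frac1n\mathbb{E}_\varepsilon\sup_{f\in\mathcal{F}}\sum_{i=1}^n\varepsilon_if_i$,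 where $\varepsilon_1,\dots,\varepsilon_n$ are i.i.d. uniform on $\{-1,1\}$. *)

theory Defs
  imports "HOL-Analysis.Analysis" "HOL-Library.FuncSet"
begin

text \<open>Vectors in R^m are represented as functions nat => real (only indices < m matter);
  a d x k matrix A is a function nat => nat => real with entries A i j, i < d, j < k.\<close>

definition vnorm :: "nat \<Rightarrow> (nat \<Rightarrow> real) \<Rightarrow> real" where
  "vnorm m x = sqrt (\<Sum>l<m. (x l)^2)"

definition norm_2inf :: "nat \<Rightarrow> nat \<Rightarrow> (nat \<Rightarrow> nat \<Rightarrow> real) \<Rightarrow> real" where
  "norm_2inf d k A = Max ((\<lambda>j. vnorm d (\<lambda>i. A i j)) ` {..<k})"

definition matT_vec :: "nat \<Rightarrow> (nat \<Rightarrow> nat \<Rightarrow> real) \<Rightarrow> (nat \<Rightarrow> real) \<Rightarrow> (nat \<Rightarrow> real)" where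
  "matT_vec d A x = (\<lambda>j. \<Sum>i<d. A i j * x i)"

definition zeta :: "nat \<Rightarrow> (nat \<Rightarrow> real) \<Rightarrow> (nat \<Rightarrow> real) \<Rightarrow> real" where
  "zeta k u v = (1 / real k) * (\<Sum>j<k. (u j - v j)^2)"

definition G_set :: "nat \<Rightarrow> nat \<Rightarrow> real \<Rightarrow> (nat \<Rightarrow> nat \<Rightarrow> real) set" where
  "G_set d k a = {A. norm_2inf d k A \<le> a}"

definition F_set :: "nat \<Rightarrow> nat \<Rightarrow> nat \<Rightarrow> (real \<Rightarrow> real) \<Rightarrow> (nat \<Rightarrow> nat \<Rightarrow> real)
    \<Rightarrow> (nat \<Rightarrow> nat \<Rightarrow> real) \<Rightarrow> (nat \<Rightarrow> nat \<Rightarrow> real) set \<Rightarrow> (nat \<Rightarrow> real) set" where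
  "F_set n d k \<phi> x x' G =
     (\<lambda>A. (\<lambda>i. if i < n then zeta k (\<lambda>j. \<phi> (matT_vec d A (x i) j)) (\<lambda>j. \<phi> (matT_vec d A (x' i) j)) else 0)) ` G"

definition rademacher :: "nat \<Rightarrow> (nat \<Rightarrow> real) set \<Rightarrow> real" where
  "rademacher n F = (1 / real n) *
     ((\<Sum>\<epsilon>\<in>PiE {..<n} (\<lambda>_. {-1, 1::real}). Sup ((\<lambda>f. \<Sum>i<n. \<epsilon> i * f i) ` F)) / 2 ^ n)"

end

theory Submission
  imports Defs
begin

text \<open>
  Since \<open>\<zeta>\<^sub>k\<close> is the average over the \<open>k\<close> columns \<open>w\<close> of \<open>A\<close> of the losses
  \<open>(\<phi>(\<langle>w,x\<^sub>i\<rangle>) - \<phi>(\<langle>w,x'\<^sub>i\<rangle>))\<^sup>2\<close>, the complexity of \<open>\<F>\<^sub>k\<close> is at most that of this loss class over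
  the ball \<open>\<parallel>w\<parallel> \<le> a\<close>. On that ball the loss is a Lipschitz function of \<open>\<phi>(\<langle>w,x\<^sub>i\<rangle>)\<close> and
  \<open>\<phi>(\<langle>w,x'\<^sub>i\<rangle>)\<close>, so the Ledoux--Talagrand comparison principle (proved by flipping one sign at
  a time) reduces it to the linear classes \<open>w \<mapsto> \<langle>w,x\<^sub>i\<rangle>\<close>. Their complexity is at most
  \<open>ab/\<surd>n\<close> by Cauchy--Schwarz and the identity \<open>\<bbbE>(\<Sum>\<epsilon>\<^sub>ic\<^sub>i)\<^sup>2 = \<Sum>c\<^sub>i\<^sup>2\<close>. The resulting bound
  \<open>8(Lab)\<^sup>2/\<surd>n\<close> is stronger than claimed, because the remaining factors \<open>\<surd>k\<close>,
  \<open>\<surd>log(2dk)\<close> and \<open>log(2 + nb\<^sup>2a\<^sup>2L\<^sup>2)\<close> have product at least \<open>1/4\<close>.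
\<close>

definition signs :: "nat \<Rightarrow> (nat \<Rightarrow> real) set" where
  "signs n = PiE {..<n} (\<lambda>_. {-1, 1})"

text \<open>\<open>rademacher_sum n S g\<close> is \<open>n 2\<^sup>n\<close> times the Rademacher complexity of \<open>{(g i s)\<^sub>i : s \<in> S}\<close>.\<close>

definition rademacher_sum :: "nat \<Rightarrow> 'a set \<Rightarrow> (nat \<Rightarrow> 'a \<Rightarrow> real) \<Rightarrow> real" where
  "rademacher_sum n S g = (\<Sum>\<epsilon>\<in>signs n. SUP s\<in>S. \<Sum>i<n. \<epsilon> i * g i s)"

definition flip_sign :: "nat \<Rightarrow> (nat \<Rightarrow> real) \<Rightarrow> nat \<Rightarrow> real" where
  "flip_sign m \<epsilon> = \<epsilon>(m := - \<epsilon> m)"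

definition dot :: "nat \<Rightarrow> (nat \<Rightarrow> real) \<Rightarrow> (nat \<Rightarrow> real) \<Rightarrow> real" where
  "dot d w y = (\<Sum>l<d. w l * y l)"

lemma card_signs: "card (signs n) = 2 ^ n"
  unfolding signs_def by (simp add: card_PiE eval_nat_numeral)

lemma signs_cases: "\<epsilon> \<in> signs n \<Longrightarrow> i < n \<Longrightarrow> \<epsilon> i = -1 \<or> \<epsilon> i = 1"
  unfolding signs_def by (auto simp: PiE_def Pi_def)

lemma abs_sign: "\<epsilon> \<in> signs n \<Longrightarrow> i < n \<Longrightarrow> \<bar>\<epsilon> i\<bar> = 1"
  using signs_cases by fastforce

lemma flip_sign_in_signs: "m < n \<Longrightarrow> \<epsilon> \<in> signs n \<Longrightarrow> flip_sign m \<epsilon> \<in> signs n"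
  unfolding signs_def flip_sign_def by (auto simp: PiE_def Pi_def extensional_def)

lemma flip_sign_flip_sign [simp]: "flip_sign m (flip_sign m \<epsilon>) = \<epsilon>"
  unfolding flip_sign_def by auto

lemma sum_signs_flip_sign:
  "m < n \<Longrightarrow> (\<Sum>\<epsilon>\<in>signs n. F (flip_sign m \<epsilon>)) = (\<Sum>\<epsilon>\<in>signs n. F \<epsilon> :: real)"
  by (rule sum.reindex_bij_witness[where i="flip_sign m" and j="flip_sign m"])
    (auto simp: flip_sign_in_signs)

lemma sum_signs_mult:
  assumes "i < n" "j < n"
  shows "(\<Sum>\<epsilon>\<in>signs n. \<epsilon> i * \<epsilon> j) = (if i = j then 2 ^ n else 0)"
proof (cases "i = j")
  case True
  have "(\<Sum>\<epsilon>\<in>signs n. \<epsilon> i * \<epsilon> j) = (\<Sum>\<epsilon>\<in>signs n. 1)"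
    using True signs_cases[OF _ assms(1)] by (intro sum.cong) fastforce+
  then show ?thesis using True card_signs[of n] by simp
next
  case False
  have "(\<Sum>\<epsilon>\<in>signs n. \<epsilon> i * \<epsilon> j) = (\<Sum>\<epsilon>\<in>signs n. flip_sign i \<epsilon> i * flip_sign i \<epsilon> j)"
    using sum_signs_flip_sign[OF assms(1), of "\<lambda>\<epsilon>. \<epsilon> i * \<epsilon> j"] by simp
  also have "\<dots> = - (\<Sum>\<epsilon>\<in>signs n. \<epsilon> i * \<epsilon> j)"
    using False by (simp add: flip_sign_def sum_negf)
  finally show ?thesis using False by simp
qed

lemma sum_signs_square_sum:
  "(\<Sum>\<epsilon>\<in>signs n. (\<Sum>i<n. \<epsilon> i * c i)\<^sup>2) = 2 ^ n * (\<Sum>i<n. (c i)\<^sup>2)"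
proof -
  have "(\<Sum>\<epsilon>\<in>signs n. (\<Sum>i<n. \<epsilon> i * c i)\<^sup>2)
      = (\<Sum>i<n. \<Sum>j<n. c i * c j * (\<Sum>\<epsilon>\<in>signs n. \<epsilon> i * \<epsilon> j))"
    by (simp add: power2_eq_square sum_product sum_distrib_left algebra_simps
        sum.swap[of _ "signs n"])
  also have "\<dots> = (\<Sum>i<n. \<Sum>j<n. if i = j then c i * c j * 2 ^ n else 0)"
    by (intro sum.cong refl) (simp add: sum_signs_mult)
  finally show ?thesis
    by (simp add: sum.delta power2_eq_square sum_distrib_left algebra_simps)
qed

subsection \<open>The comparison principle\<close>

lemma rademacher_sum_cong:
  "(\<And>i s. i < n \<Longrightarrow> s \<in> S \<Longrightarrow> g i s = h i s) \<Longrightarrow> rademacher_sum n S g = rademacher_sum n S h"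
  unfolding rademacher_sum_def by (intro sum.cong refl SUP_cong) auto

lemma bdd_above_signed_sums:
  assumes "\<epsilon> \<in> signs n" "\<forall>i<n. \<forall>s\<in>S. \<bar>g i s\<bar> \<le> K"
  shows "bdd_above ((\<lambda>s. \<Sum>i<n. \<epsilon> i * g i s) ` S)"
proof (rule bdd_aboveI2[where M="real n * K"])
  fix s assume "s \<in> S"
  have "(\<Sum>i<n. \<epsilon> i * g i s) \<le> (\<Sum>i<n. \<bar>\<epsilon> i * g i s\<bar>)"
    by (rule sum_mono) simp
  also have "\<dots> \<le> (\<Sum>i<n. K)"
    using assms \<open>s \<in> S\<close> by (intro sum_mono) (simp add: abs_mult abs_sign)
  finally show "(\<Sum>i<n. \<epsilon> i * g i s) \<le> real n * K" by simp
qed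

lemma sup_pair_comparison:
  fixes g h G :: "'a \<Rightarrow> real"
  assumes "S \<noteq> {}"
    and bdd_plus: "bdd_above ((\<lambda>s. h s + G s) ` S)"
    and bdd_minus: "bdd_above ((\<lambda>s. - h s + G s) ` S)"
    and cmp: "\<forall>s\<in>S. \<forall>t\<in>S. \<bar>g s - g t\<bar> \<le> \<bar>h s - h t\<bar>"
  shows "(SUP s\<in>S. g s + G s) + (SUP s\<in>S. - g s + G s)
       \<le> (SUP s\<in>S. h s + G s) + (SUP s\<in>S. - h s + G s)"
proof -
  define R where "R = (SUP s\<in>S. h s + G s) + (SUP s\<in>S. - h s + G s)"
  have pair: "(g s + G s) + (- g t + G t) \<le> R" if "s \<in> S" "t \<in> S" for s t
  proof -
    have "g s - g t \<le> \<bar>h s - h t\<bar>" using cmp that by fastforce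
    moreover have "h s + G s \<le> (SUP s\<in>S. h s + G s)" "h t + G t \<le> (SUP s\<in>S. h s + G s)"
      using that by (blast intro: cSUP_upper[OF _ bdd_plus])+
    moreover have "- h s + G s \<le> (SUP s\<in>S. - h s + G s)" "- h t + G t \<le> (SUP s\<in>S. - h s + G s)"
      using that by (blast intro: cSUP_upper[OF _ bdd_minus])+
    ultimately show ?thesis unfolding R_def by linarith
  qed
  have "(SUP s\<in>S. g s + G s) \<le> R - (SUP s\<in>S. - g s + G s)"
  proof (rule cSUP_least[OF \<open>S \<noteq> {}\<close>])
    fix s assume "s \<in> S"
    have "(SUP t\<in>S. - g t + G t) \<le> R - (g s + G s)"
      by (rule cSUP_least[OF \<open>S \<noteq> {}\<close>]) (use pair \<open>s \<in> S\<close> in fastforce)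
    then show "g s + G s \<le> R - (SUP s\<in>S. - g s + G s)" by linarith
  qed
  then show ?thesis unfolding R_def by linarith
qed

lemma rademacher_sum_flip_pairs:
  assumes "m < n"
  shows "2 * rademacher_sum n S g = (\<Sum>\<epsilon>\<in>signs n.
    (SUP s\<in>S. \<Sum>i<n. \<epsilon> i * g i s) + (SUP s\<in>S. \<Sum>i<n. flip_sign m \<epsilon> i * g i s))"
  unfolding rademacher_sum_def sum.distrib
    sum_signs_flip_sign[OF assms, of "\<lambda>\<epsilon>. SUP s\<in>S. \<Sum>i<n. \<epsilon> i * g i s"] by simp

lemma rademacher_sum_comparison_coordinate:
  fixes g h :: "nat \<Rightarrow> 'a \<Rightarrow> real"
  assumes "S \<noteq> {}" "m < n"
    and bdd: "\<forall>\<epsilon>\<in>signs n. bdd_above ((\<lambda>s. \<Sum>i<n. \<epsilon> i * h i s) ` S)"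
    and agree: "\<And>i. i \<noteq> m \<Longrightarrow> h i = g i"
    and cmp: "\<forall>s\<in>S. \<forall>t\<in>S. \<bar>g m s - g m t\<bar> \<le> \<bar>h m s - h m t\<bar>"
  shows "rademacher_sum n S g \<le> rademacher_sum n S h"
proof -
  define G where "G \<epsilon> s = (\<Sum>i\<in>{..<n}-{m}. \<epsilon> i * g i s)" for \<epsilon> :: "nat \<Rightarrow> real" and s
  define F where "F f \<epsilon> = (SUP s\<in>S. \<Sum>i<n. \<epsilon> i * f i s)" for f :: "nat \<Rightarrow> 'a \<Rightarrow> real" and \<epsilon>
  have split_g: "(\<Sum>i<n. \<epsilon> i * g i s) = \<epsilon> m * g m s + G \<epsilon> s" for \<epsilon> s
    unfolding G_def using \<open>m < n\<close> by (subst sum.remove[where x=m]) auto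
  have split_h: "(\<Sum>i<n. \<epsilon> i * h i s) = \<epsilon> m * h m s + G \<epsilon> s" for \<epsilon> s
    unfolding G_def using \<open>m < n\<close> agree by (subst sum.remove[where x=m]) auto
  have G_flip: "G (flip_sign m \<epsilon>) = G \<epsilon>" for \<epsilon>
    unfolding G_def flip_sign_def by (intro ext sum.cong) auto
  have flip_m: "flip_sign m \<epsilon> m = - \<epsilon> m" for \<epsilon>
    unfolding flip_sign_def by simp
  have pair_plus: "F g \<epsilon> + F g (flip_sign m \<epsilon>) \<le> F h \<epsilon> + F h (flip_sign m \<epsilon>)"
    if "\<epsilon> \<in> signs n" "\<epsilon> m = 1" for \<epsilon>
  proof -
    have "bdd_above ((\<lambda>s. h m s + G \<epsilon> s) ` S)"
      using bspec[OF bdd that(1)] that(2) by (simp add: split_h)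
    moreover have "bdd_above ((\<lambda>s. - h m s + G \<epsilon> s) ` S)"
      using bspec[OF bdd flip_sign_in_signs[OF \<open>m < n\<close> that(1)]] that(2)
      by (simp add: split_h flip_m G_flip)
    ultimately show ?thesis
      using sup_pair_comparison[OF \<open>S \<noteq> {}\<close> _ _ cmp] that
      unfolding F_def split_g split_h flip_m G_flip by simp
  qed
  have pair: "F g \<epsilon> + F g (flip_sign m \<epsilon>) \<le> F h \<epsilon> + F h (flip_sign m \<epsilon>)"
    if "\<epsilon> \<in> signs n" for \<epsilon>
    using signs_cases[OF that \<open>m < n\<close>]
  proof
    assume "\<epsilon> m = -1"
    then show ?thesis
      using pair_plus[of "flip_sign m \<epsilon>"] flip_sign_in_signs[OF \<open>m < n\<close> that] flip_m
      by (simp add: add.commute)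
  qed (use pair_plus that in blast)
  have "2 * rademacher_sum n S g \<le> 2 * rademacher_sum n S h"
    unfolding rademacher_sum_flip_pairs[OF \<open>m < n\<close>] using pair unfolding F_def
    by (intro sum_mono) auto
  then show ?thesis by simp
qed

lemma rademacher_sum_comparison:
  fixes g h :: "nat \<Rightarrow> 'a \<Rightarrow> real"
  assumes "S \<noteq> {}"
    and bound_g: "\<forall>i<n. \<forall>s\<in>S. \<bar>g i s\<bar> \<le> K" and bound_h: "\<forall>i<n. \<forall>s\<in>S. \<bar>h i s\<bar> \<le> K"
    and cmp: "\<forall>i<n. \<forall>s\<in>S. \<forall>t\<in>S. \<bar>g i s - g i t\<bar> \<le> \<bar>h i s - h i t\<bar>"
  shows "rademacher_sum n S g \<le> rademacher_sum n S h"
proof -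
  define mix where "mix j = (\<lambda>i. if i < j then h i else g i)" for j
  have "j \<le> n \<longrightarrow> rademacher_sum n S g \<le> rademacher_sum n S (mix j)" for j
  proof (induction j)
    case 0
    then show ?case unfolding mix_def by simp
  next
    case (Suc j)
    have "\<forall>\<epsilon>\<in>signs n. bdd_above ((\<lambda>s. \<Sum>i<n. \<epsilon> i * mix (Suc j) i s) ` S)"
      using bound_g bound_h by (intro ballI bdd_above_signed_sums[where K=K]) (auto simp: mix_def)
    then have "Suc j \<le> n \<Longrightarrow> rademacher_sum n S (mix j) \<le> rademacher_sum n S (mix (Suc j))"
      using cmp by (intro rademacher_sum_comparison_coordinate[OF \<open>S \<noteq> {}\<close>, of j]) (auto simp: mix_def)
    then show ?case using Suc by auto
  qed
  then have "rademacher_sum n S g \<le> rademacher_sum n S (mix n)" by simp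
  also have "\<dots> = rademacher_sum n S h"
    by (rule rademacher_sum_cong) (simp add: mix_def)
  finally show ?thesis .
qed

lemma rademacher_sum_add_le:
  fixes f g :: "nat \<Rightarrow> 'a \<Rightarrow> real"
  assumes "S \<noteq> {}"
    and bound_f: "\<forall>i<n. \<forall>s\<in>S. \<bar>f i s\<bar> \<le> K" and bound_g: "\<forall>i<n. \<forall>s\<in>S. \<bar>g i s\<bar> \<le> K"
  shows "rademacher_sum n S (\<lambda>i s. f i s + g i s) \<le> rademacher_sum n S f + rademacher_sum n S g"
  unfolding rademacher_sum_def sum.distrib[symmetric]
proof (rule sum_mono)
  fix \<epsilon> assume "\<epsilon> \<in> signs n"
  note bdd_f = bdd_above_signed_sums[OF \<open>\<epsilon> \<in> signs n\<close> bound_f]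
  note bdd_g = bdd_above_signed_sums[OF \<open>\<epsilon> \<in> signs n\<close> bound_g]
  show "(SUP s\<in>S. \<Sum>i<n. \<epsilon> i * (f i s + g i s))
        \<le> (SUP s\<in>S. \<Sum>i<n. \<epsilon> i * f i s) + (SUP s\<in>S. \<Sum>i<n. \<epsilon> i * g i s)"
  proof (rule cSUP_least[OF \<open>S \<noteq> {}\<close>])
    fix s assume "s \<in> S"
    have "(\<Sum>i<n. \<epsilon> i * (f i s + g i s)) = (\<Sum>i<n. \<epsilon> i * f i s) + (\<Sum>i<n. \<epsilon> i * g i s)"
      by (simp add: distrib_left sum.distrib)
    also have "\<dots> \<le> (SUP s\<in>S. \<Sum>i<n. \<epsilon> i * f i s) + (SUP s\<in>S. \<Sum>i<n. \<epsilon> i * g i s)"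
      by (intro add_mono cSUP_upper[OF \<open>s \<in> S\<close>] bdd_f bdd_g)
    finally show "(\<Sum>i<n. \<epsilon> i * (f i s + g i s))
        \<le> (SUP s\<in>S. \<Sum>i<n. \<epsilon> i * f i s) + (SUP s\<in>S. \<Sum>i<n. \<epsilon> i * g i s)" .
  qed
qed

subsection \<open>Linear classes\<close>

lemma vnorm_nonneg: "0 \<le> vnorm d w"
  unfolding vnorm_def by (simp add: sum_nonneg)

lemma vnorm_power2: "(vnorm d w)\<^sup>2 = (\<Sum>l<d. (w l)\<^sup>2)"
  unfolding vnorm_def by (simp add: sum_nonneg)

lemma vnorm_zero: "vnorm d (\<lambda>_. 0) = 0"
  unfolding vnorm_def by simp

lemma abs_dot_le_vnorm: "\<bar>dot d w y\<bar> \<le> vnorm d w * vnorm d y"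
proof -
  have "(dot d w y)\<^sup>2 \<le> (\<Sum>l<d. (w l)\<^sup>2) * (\<Sum>l<d. (y l)\<^sup>2)"
    unfolding dot_def by (rule Cauchy_Schwarz_ineq_sum)
  also have "\<dots> = (vnorm d w * vnorm d y)\<^sup>2"
    by (simp add: vnorm_power2 power_mult_distrib)
  finally show ?thesis
    using vnorm_nonneg[of d w] vnorm_nonneg[of d y] by (simp add: power2_le_iff_abs_le)
qed

lemma abs_dot_le:
  "vnorm d w \<le> a \<Longrightarrow> vnorm d y \<le> b \<Longrightarrow> \<bar>dot d w y\<bar> \<le> a * b"
  using abs_dot_le_vnorm[of d w y] vnorm_nonneg[of d w] vnorm_nonneg[of d y]
  by (meson mult_mono order_trans)

lemma sum_signs_vnorm_le:
  "(\<Sum>\<epsilon>\<in>signs n. vnorm d (\<lambda>l. \<Sum>i<n. \<epsilon> i * y i l))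
    \<le> 2 ^ n * sqrt (\<Sum>i<n. (vnorm d (y i))\<^sup>2)"
proof -
  define z where "z \<epsilon> = vnorm d (\<lambda>l. \<Sum>i<n. \<epsilon> i * y i l)" for \<epsilon>
  have "(\<Sum>\<epsilon>\<in>signs n. (z \<epsilon>)\<^sup>2) = (\<Sum>l<d. \<Sum>\<epsilon>\<in>signs n. (\<Sum>i<n. \<epsilon> i * y i l)\<^sup>2)"
    unfolding z_def vnorm_power2 by (rule sum.swap)
  also have "\<dots> = 2 ^ n * (\<Sum>i<n. (vnorm d (y i))\<^sup>2)"
    by (simp add: sum_signs_square_sum vnorm_power2 sum_distrib_left sum.swap[of _ "{..<d}"])
  finally have "(\<Sum>\<epsilon>\<in>signs n. z \<epsilon>)\<^sup>2 \<le> 2 ^ n * (\<Sum>i<n. (vnorm d (y i))\<^sup>2) * 2 ^ n"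
    using sum_squared_le_sum_of_squares[of z "signs n"] by (simp add: card_signs)
  then have "(\<Sum>\<epsilon>\<in>signs n. z \<epsilon>) \<le> sqrt ((2 ^ n)\<^sup>2 * (\<Sum>i<n. (vnorm d (y i))\<^sup>2))"
    by (intro real_le_rsqrt) (simp add: power2_eq_square algebra_simps)
  then show ?thesis
    unfolding z_def by (simp add: real_sqrt_mult)
qed

lemma rademacher_sum_linear_le:
  assumes "0 \<le> c" "0 \<le> a" "0 \<le> b" and bound: "\<forall>i<n. vnorm d (y i) \<le> b"
  shows "rademacher_sum n {w. vnorm d w \<le> a} (\<lambda>i w. c * dot d w (y i))
    \<le> 2 ^ n * (c * a * b * sqrt (real n))"
proof -
  define W where "W = {w. vnorm d w \<le> a}"
  have "W \<noteq> {}"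
    using \<open>0 \<le> a\<close> vnorm_zero[of d] unfolding W_def by (metis empty_Collect_eq)
  define z where "z \<epsilon> = vnorm d (\<lambda>l. \<Sum>i<n. \<epsilon> i * y i l)" for \<epsilon>
  have sup_le: "(SUP w\<in>W. \<Sum>i<n. \<epsilon> i * (c * dot d w (y i))) \<le> c * a * z \<epsilon>" for \<epsilon>
  proof (rule cSUP_least[OF \<open>W \<noteq> {}\<close>])
    fix w assume "w \<in> W"
    have "(\<Sum>i<n. \<epsilon> i * (c * dot d w (y i))) = c * dot d w (\<lambda>l. \<Sum>i<n. \<epsilon> i * y i l)"
      unfolding dot_def by (simp add: sum_distrib_left sum.swap[of _ "{..<n}"] algebra_simps)
    also have "\<dots> \<le> c * (a * z \<epsilon>)"
      using \<open>w \<in> W\<close> \<open>0 \<le> c\<close> unfolding W_def z_def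
      by (intro mult_left_mono abs_le_D1[OF abs_dot_le]) auto
    finally show "(\<Sum>i<n. \<epsilon> i * (c * dot d w (y i))) \<le> c * a * z \<epsilon>" by simp
  qed
  have "(\<Sum>i<n. (vnorm d (y i))\<^sup>2) \<le> (\<Sum>i<n. b\<^sup>2)"
    using bound vnorm_nonneg by (intro sum_mono power_mono) auto
  then have "sqrt (\<Sum>i<n. (vnorm d (y i))\<^sup>2) \<le> sqrt (real n * b\<^sup>2)"
    by (simp add: real_sqrt_le_mono)
  also have "\<dots> = b * sqrt (real n)"
    using \<open>0 \<le> b\<close> by (simp add: real_sqrt_mult)
  finally have "(\<Sum>\<epsilon>\<in>signs n. z \<epsilon>) \<le> 2 ^ n * (b * sqrt (real n))"
    unfolding z_def by (rule order_trans[OF sum_signs_vnorm_le mult_left_mono]) simp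
  then have "c * a * (\<Sum>\<epsilon>\<in>signs n. z \<epsilon>) \<le> c * a * (2 ^ n * (b * sqrt (real n)))"
    using assms by (intro mult_left_mono) auto
  moreover have "rademacher_sum n W (\<lambda>i w. c * dot d w (y i)) \<le> c * a * (\<Sum>\<epsilon>\<in>signs n. z \<epsilon>)"
    unfolding rademacher_sum_def sum_distrib_left by (intro sum_mono sup_le)
  ultimately show ?thesis
    unfolding W_def by (simp add: algebra_simps)
qed

subsection \<open>Lipschitz losses\<close>

lemma lipschitz_const_nonneg:
  fixes \<phi> :: "real \<Rightarrow> real"
  assumes "\<forall>s t. \<bar>\<phi> s - \<phi> t\<bar> \<le> L * \<bar>s - t\<bar>"
  shows "0 \<le> L"
  using assms[rule_format, of 1 0] abs_ge_zero[of "\<phi> 1 - \<phi> 0"] by simp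

lemma abs_lipschitz_le:
  fixes \<phi> :: "real \<Rightarrow> real"
  assumes "\<forall>s t. \<bar>\<phi> s - \<phi> t\<bar> \<le> L * \<bar>s - t\<bar>" "\<phi> 0 = 0"
  shows "\<bar>\<phi> s\<bar> \<le> L * \<bar>s\<bar>"
  using assms(1)[rule_format, of s 0] assms(2) by simp

lemma rademacher_sum_lipschitz_contraction:
  fixes u :: "nat \<Rightarrow> 'a \<Rightarrow> real"
  assumes "S \<noteq> {}" and lip: "\<forall>s t. \<bar>\<phi> s - \<phi> t\<bar> \<le> L * \<bar>s - t\<bar>" and "\<phi> 0 = 0"
    and bound: "\<forall>i<n. \<forall>s\<in>S. \<bar>u i s\<bar> \<le> R"
  shows "rademacher_sum n S (\<lambda>i s. c * \<phi> (u i s)) \<le> rademacher_sum n S (\<lambda>i s. \<bar>c\<bar> * L * u i s)"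
proof (rule rademacher_sum_comparison[OF \<open>S \<noteq> {}\<close>, where K="\<bar>c\<bar> * L * R"])
  have "0 \<le> L" by (rule lipschitz_const_nonneg[OF lip])
  show "\<forall>i<n. \<forall>s\<in>S. \<bar>c * \<phi> (u i s)\<bar> \<le> \<bar>c\<bar> * L * R"
  proof (intro allI impI ballI)
    fix i s assume "i < n" "s \<in> S"
    have "\<bar>c * \<phi> (u i s)\<bar> \<le> \<bar>c\<bar> * (L * \<bar>u i s\<bar>)"
      unfolding abs_mult by (intro mult_left_mono abs_lipschitz_le[OF lip \<open>\<phi> 0 = 0\<close>]) auto
    also have "\<dots> \<le> \<bar>c\<bar> * (L * R)"
      using bound \<open>i < n\<close> \<open>s \<in> S\<close> \<open>0 \<le> L\<close> by (intro mult_left_mono) auto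
    finally show "\<bar>c * \<phi> (u i s)\<bar> \<le> \<bar>c\<bar> * L * R" by (simp add: mult.assoc)
  qed
  show "\<forall>i<n. \<forall>s\<in>S. \<bar>\<bar>c\<bar> * L * u i s\<bar> \<le> \<bar>c\<bar> * L * R"
    using bound \<open>0 \<le> L\<close> by (auto simp: abs_mult intro: mult_left_mono)
  show "\<forall>i<n. \<forall>s\<in>S. \<forall>t\<in>S. \<bar>c * \<phi> (u i s) - c * \<phi> (u i t)\<bar> \<le> \<bar>\<bar>c\<bar> * L * u i s - \<bar>c\<bar> * L * u i t\<bar>"
  proof (intro allI impI ballI)
    fix i s t
    have "\<bar>c * \<phi> (u i s) - c * \<phi> (u i t)\<bar> = \<bar>c\<bar> * \<bar>\<phi> (u i s) - \<phi> (u i t)\<bar>"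
      by (simp add: abs_mult right_diff_distrib[symmetric])
    also have "\<dots> \<le> \<bar>c\<bar> * (L * \<bar>u i s - u i t\<bar>)"
      using lip by (intro mult_left_mono) auto
    also have "\<dots> = \<bar>\<bar>c\<bar> * L * u i s - \<bar>c\<bar> * L * u i t\<bar>"
      using \<open>0 \<le> L\<close> by (simp add: abs_mult right_diff_distrib[symmetric] mult.assoc)
    finally show "\<bar>c * \<phi> (u i s) - c * \<phi> (u i t)\<bar> \<le> \<bar>\<bar>c\<bar> * L * u i s - \<bar>c\<bar> * L * u i t\<bar>" .
  qed
qed

lemma rademacher_sum_square_le:
  fixes p :: "nat \<Rightarrow> 'a \<Rightarrow> real"
  assumes "S \<noteq> {}" "0 \<le> B" and bound: "\<forall>i<n. \<forall>s\<in>S. \<bar>p i s\<bar> \<le> B"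
  shows "rademacher_sum n S (\<lambda>i s. (p i s)\<^sup>2) \<le> rademacher_sum n S (\<lambda>i s. 2 * B * p i s)"
proof (rule rademacher_sum_comparison[OF \<open>S \<noteq> {}\<close>, where K="2 * B\<^sup>2"])
  show "\<forall>i<n. \<forall>s\<in>S. \<bar>(p i s)\<^sup>2\<bar> \<le> 2 * B\<^sup>2"
  proof (intro allI impI ballI)
    fix i s assume "i < n" "s \<in> S"
    have "\<bar>p i s\<bar>\<^sup>2 \<le> B\<^sup>2"
      using bound \<open>i < n\<close> \<open>s \<in> S\<close> by (intro power_mono) auto
    then show "\<bar>(p i s)\<^sup>2\<bar> \<le> 2 * B\<^sup>2"
      using zero_le_power2[of B] by (simp only: power2_abs abs_power2)
  qed
  show "\<forall>i<n. \<forall>s\<in>S. \<bar>2 * B * p i s\<bar> \<le> 2 * B\<^sup>2"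
    using bound \<open>0 \<le> B\<close> by (auto simp: abs_mult power2_eq_square intro: mult_left_mono)
  show "\<forall>i<n. \<forall>s\<in>S. \<forall>t\<in>S. \<bar>(p i s)\<^sup>2 - (p i t)\<^sup>2\<bar> \<le> \<bar>2 * B * p i s - 2 * B * p i t\<bar>"
  proof (intro allI impI ballI)
    fix i s t assume "i < n" "s \<in> S" "t \<in> S"
    have "\<bar>(p i s)\<^sup>2 - (p i t)\<^sup>2\<bar> = \<bar>p i s - p i t\<bar> * \<bar>p i s + p i t\<bar>"
      by (simp add: power2_eq_square abs_mult[symmetric] algebra_simps)
    also have "\<dots> \<le> \<bar>p i s - p i t\<bar> * (2 * B)"
    proof (rule mult_left_mono)
      have "\<bar>p i s\<bar> \<le> B" "\<bar>p i t\<bar> \<le> B"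
        using bound \<open>i < n\<close> \<open>s \<in> S\<close> \<open>t \<in> S\<close> by auto
      then show "\<bar>p i s + p i t\<bar> \<le> 2 * B"
        using abs_triangle_ineq[of "p i s" "p i t"] by linarith
    qed simp
    also have "\<dots> = \<bar>2 * B * p i s - 2 * B * p i t\<bar>"
      using \<open>0 \<le> B\<close> by (simp add: abs_mult right_diff_distrib[symmetric])
    finally show "\<bar>(p i s)\<^sup>2 - (p i t)\<^sup>2\<bar> \<le> \<bar>2 * B * p i s - 2 * B * p i t\<bar>" .
  qed
qed

lemma rademacher_sum_square_diff_le:
  fixes u v :: "nat \<Rightarrow> 'a \<Rightarrow> real"
  assumes "S \<noteq> {}" and lip: "\<forall>s t. \<bar>\<phi> s - \<phi> t\<bar> \<le> L * \<bar>s - t\<bar>" and "\<phi> 0 = 0" and "0 \<le> R"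
    and bound_u: "\<forall>i<n. \<forall>s\<in>S. \<bar>u i s\<bar> \<le> R" and bound_v: "\<forall>i<n. \<forall>s\<in>S. \<bar>v i s\<bar> \<le> R"
  shows "rademacher_sum n S (\<lambda>i s. (\<phi> (u i s) - \<phi> (v i s))\<^sup>2)
    \<le> rademacher_sum n S (\<lambda>i s. 4 * L\<^sup>2 * R * u i s) + rademacher_sum n S (\<lambda>i s. 4 * L\<^sup>2 * R * v i s)"
proof -
  have "0 \<le> L" by (rule lipschitz_const_nonneg[OF lip])
  define B where "B = 2 * L * R"
  have "0 \<le> B" unfolding B_def using \<open>0 \<le> L\<close> \<open>0 \<le> R\<close> by simp
  have abs_phi: "\<bar>\<phi> (f i s)\<bar> \<le> L * R" if "\<forall>i<n. \<forall>s\<in>S. \<bar>f i s\<bar> \<le> R" "i < n" "s \<in> S" for f i s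
    using abs_lipschitz_le[OF lip \<open>\<phi> 0 = 0\<close>, of "f i s"] that \<open>0 \<le> L\<close>
    by (meson mult_left_mono order_trans)
  have "\<forall>i<n. \<forall>s\<in>S. \<bar>\<phi> (u i s) - \<phi> (v i s)\<bar> \<le> B"
    using abs_phi[OF bound_u] abs_phi[OF bound_v] unfolding B_def by fastforce
  then have "rademacher_sum n S (\<lambda>i s. (\<phi> (u i s) - \<phi> (v i s))\<^sup>2)
      \<le> rademacher_sum n S (\<lambda>i s. 2 * B * (\<phi> (u i s) - \<phi> (v i s)))"
    by (rule rademacher_sum_square_le[OF \<open>S \<noteq> {}\<close> \<open>0 \<le> B\<close>])
  also have "\<dots> = rademacher_sum n S (\<lambda>i s. 2 * B * \<phi> (u i s) + - (2 * B) * \<phi> (v i s))"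
    by (simp add: algebra_simps)
  also have "\<dots> \<le> rademacher_sum n S (\<lambda>i s. 2 * B * \<phi> (u i s))
      + rademacher_sum n S (\<lambda>i s. - (2 * B) * \<phi> (v i s))"
  proof (rule rademacher_sum_add_le[OF \<open>S \<noteq> {}\<close>, where K="2 * B * (L * R)"])
    show "\<forall>i<n. \<forall>s\<in>S. \<bar>2 * B * \<phi> (u i s)\<bar> \<le> 2 * B * (L * R)"
      using abs_phi[OF bound_u] \<open>0 \<le> B\<close> by (auto simp: abs_mult intro: mult_left_mono)
    show "\<forall>i<n. \<forall>s\<in>S. \<bar>- (2 * B) * \<phi> (v i s)\<bar> \<le> 2 * B * (L * R)"
      using abs_phi[OF bound_v] \<open>0 \<le> B\<close> by (auto simp: abs_mult intro: mult_left_mono)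
  qed
  also have "\<dots> \<le> rademacher_sum n S (\<lambda>i s. \<bar>2 * B\<bar> * L * u i s)
      + rademacher_sum n S (\<lambda>i s. \<bar>- (2 * B)\<bar> * L * v i s)"
    by (intro add_mono rademacher_sum_lipschitz_contraction[OF \<open>S \<noteq> {}\<close> lip \<open>\<phi> 0 = 0\<close> bound_u]
        rademacher_sum_lipschitz_contraction[OF \<open>S \<noteq> {}\<close> lip \<open>\<phi> 0 = 0\<close> bound_v])
  finally show ?thesis
    unfolding B_def using \<open>0 \<le> L\<close> \<open>0 \<le> R\<close> by (simp add: power2_eq_square mult_ac)
qed

lemma matT_vec_eq_dot: "matT_vec d A y j = dot d (\<lambda>l. A l j) y"
  unfolding matT_vec_def dot_def by (simp add: mult.commute)

lemma zero_in_G_set: "k \<ge> 1 \<Longrightarrow> 0 \<le> a \<Longrightarrow> (\<lambda>_ _. 0) \<in> G_set d k a"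
  unfolding G_set_def norm_2inf_def by (auto simp: vnorm_zero image_constant_conv lessThan_empty_iff)

lemma vnorm_column_le_norm_2inf: "j < k \<Longrightarrow> vnorm d (\<lambda>l. A l j) \<le> norm_2inf d k A"
  unfolding norm_2inf_def by (rule Max_ge) auto

lemma rademacher_F_set_le_column_class:
  fixes x x' :: "nat \<Rightarrow> nat \<Rightarrow> real"
  assumes "k \<ge> 1" "0 \<le> a"
    and bound: "\<forall>i<n. \<forall>w\<in>{w. vnorm d w \<le> a}. \<bar>(\<phi> (dot d w (x i)) - \<phi> (dot d w (x' i)))\<^sup>2\<bar> \<le> K"
  shows "rademacher n (F_set n d k \<phi> x x' (G_set d k a))
    \<le> rademacher_sum n {w. vnorm d w \<le> a} (\<lambda>i w. (\<phi> (dot d w (x i)) - \<phi> (dot d w (x' i)))\<^sup>2)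
      / (real n * 2 ^ n)"
proof -
  define W where "W = {w. vnorm d w \<le> a}"
  define g where "g i w = (\<phi> (dot d w (x i)) - \<phi> (dot d w (x' i)))\<^sup>2" for i w
  have sup_le: "Sup ((\<lambda>f. \<Sum>i<n. \<epsilon> i * f i) ` F_set n d k \<phi> x x' (G_set d k a))
      \<le> (SUP w\<in>W. \<Sum>i<n. \<epsilon> i * g i w)" if "\<epsilon> \<in> signs n" for \<epsilon>
    unfolding F_set_def image_image
  proof (rule cSUP_least)
    show "G_set d k a \<noteq> {}" using zero_in_G_set[OF assms(1,2)] by blast
    fix A assume "A \<in> G_set d k a"
    have column_in_W: "(\<lambda>l. A l j) \<in> W" if "j < k" for j
      using vnorm_column_le_norm_2inf[OF that, of d A] \<open>A \<in> G_set d k a\<close>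
      unfolding W_def G_set_def by simp
    have "(\<Sum>i<n. \<epsilon> i * (if i < n then zeta k (\<lambda>j. \<phi> (matT_vec d A (x i) j))
            (\<lambda>j. \<phi> (matT_vec d A (x' i) j)) else 0))
        = (1 / real k) * (\<Sum>j<k. \<Sum>i<n. \<epsilon> i * g i (\<lambda>l. A l j))"
      unfolding zeta_def matT_vec_eq_dot g_def
      by (simp add: sum_distrib_left sum.swap[of _ "{..<k}"] algebra_simps)
    also have "\<dots> \<le> (1 / real k) * (\<Sum>j<k. SUP w\<in>W. \<Sum>i<n. \<epsilon> i * g i w)"
      using bdd_above_signed_sums[OF that bound[folded W_def g_def]]
      by (intro mult_left_mono sum_mono cSUP_upper column_in_W) auto
    also have "\<dots> = (SUP w\<in>W. \<Sum>i<n. \<epsilon> i * g i w)"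
      using \<open>k \<ge> 1\<close> by simp
    finally show "(\<Sum>i<n. \<epsilon> i * (if i < n then zeta k (\<lambda>j. \<phi> (matT_vec d A (x i) j))
            (\<lambda>j. \<phi> (matT_vec d A (x' i) j)) else 0))
        \<le> (SUP w\<in>W. \<Sum>i<n. \<epsilon> i * g i w)" .
  qed
  have "rademacher n (F_set n d k \<phi> x x' (G_set d k a)) \<le> (1 / real n) * (rademacher_sum n W g / 2 ^ n)"
    unfolding rademacher_def rademacher_sum_def signs_def[symmetric]
    by (intro mult_left_mono divide_right_mono sum_mono sup_le) auto
  then show ?thesis
    unfolding W_def g_def by simp
qed

lemma rademacher_F_set_le:
  fixes x x' :: "nat \<Rightarrow> nat \<Rightarrow> real" and \<phi> :: "real \<Rightarrow> real"
  assumes "k \<ge> 1" and lip: "\<forall>s t. \<bar>\<phi> s - \<phi> t\<bar> \<le> L * \<bar>s - t\<bar>" and "\<phi> 0 = 0"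
    and "0 \<le> a" "0 \<le> b" and bound: "\<forall>i<n. vnorm d (x i) \<le> b \<and> vnorm d (x' i) \<le> b"
  shows "rademacher n (F_set n d k \<phi> x x' (G_set d k a)) \<le> 8 * (L * a * b)\<^sup>2 / sqrt (real n)"
proof -
  define W where "W = {w. vnorm d w \<le> a}"
  define u where "u i w = dot d w (x i)" for i w
  define v where "v i w = dot d w (x' i)" for i w
  define c where "c = 4 * L\<^sup>2 * (a * b)"
  have "0 \<le> L" by (rule lipschitz_const_nonneg[OF lip])
  have "W \<noteq> {}" using \<open>0 \<le> a\<close> vnorm_zero[of d] unfolding W_def by (metis empty_Collect_eq)
  have bound_u: "\<forall>i<n. \<forall>w\<in>W. \<bar>u i w\<bar> \<le> a * b" and bound_v: "\<forall>i<n. \<forall>w\<in>W. \<bar>v i w\<bar> \<le> a * b"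
    using bound unfolding W_def u_def v_def by (auto intro: abs_dot_le)
  have "\<bar>\<phi> (u i w) - \<phi> (v i w)\<bar> \<le> 2 * L * (a * b)" if "i < n" "w \<in> W" for i w
    using abs_lipschitz_le[OF lip \<open>\<phi> 0 = 0\<close>, of "u i w"] abs_lipschitz_le[OF lip \<open>\<phi> 0 = 0\<close>, of "v i w"]
      mult_left_mono[OF bound_u[rule_format, OF that] \<open>0 \<le> L\<close>]
      mult_left_mono[OF bound_v[rule_format, OF that] \<open>0 \<le> L\<close>]
    by linarith
  then have loss_bound: "\<forall>i<n. \<forall>w\<in>W. \<bar>(\<phi> (u i w) - \<phi> (v i w))\<^sup>2\<bar> \<le> (2 * L * (a * b))\<^sup>2"
    using \<open>0 \<le> L\<close> \<open>0 \<le> a\<close> \<open>0 \<le> b\<close> by (simp add: power2_le_iff_abs_le)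
  have "rademacher n (F_set n d k \<phi> x x' (G_set d k a))
      \<le> rademacher_sum n W (\<lambda>i w. (\<phi> (u i w) - \<phi> (v i w))\<^sup>2) / (real n * 2 ^ n)"
    using rademacher_F_set_le_column_class[OF \<open>k \<ge> 1\<close> \<open>0 \<le> a\<close>] loss_bound
    unfolding W_def u_def v_def by blast
  also have "\<dots> \<le> (rademacher_sum n W (\<lambda>i w. c * u i w) + rademacher_sum n W (\<lambda>i w. c * v i w))
      / (real n * 2 ^ n)"
    unfolding c_def using \<open>0 \<le> a\<close> \<open>0 \<le> b\<close>
    by (intro divide_right_mono rademacher_sum_square_diff_le[OF \<open>W \<noteq> {}\<close> lip \<open>\<phi> 0 = 0\<close> _ bound_u bound_v])
      auto
  also have "\<dots> \<le> (2 ^ n * (c * a * b * sqrt (real n)) + 2 ^ n * (c * a * b * sqrt (real n)))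
      / (real n * 2 ^ n)"
    unfolding W_def u_def v_def c_def using \<open>0 \<le> a\<close> \<open>0 \<le> b\<close> bound
    by (intro divide_right_mono add_mono rademacher_sum_linear_le) auto
  also have "\<dots> = 2 * c * a * b * (sqrt (real n) / real n)"
    by simp
  also have "\<dots> = 2 * c * a * b * inverse (sqrt (real n))"
    by (simp add: sqrt_divide_self_eq)
  also have "\<dots> = 8 * (L * a * b)\<^sup>2 / sqrt (real n)"
    unfolding c_def by (simp add: power2_eq_square divide_inverse mult_ac)
  finally show ?thesis .
qed

lemma quarter_le_log_factors:
  assumes "d \<ge> 1" "k \<ge> 1" "0 \<le> t"
  shows "1 / 4 \<le> sqrt (real k) * sqrt (ln (2 * real d * real k)) * ln (2 + t)"
proof -
  have "1 / 2 \<le> ln (2::real)" using ln2_ge_two_thirds by linarith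
  have "real d * real k \<ge> 1" using assms mult_mono[of 1 "real d" 1 "real k"] by simp
  then have "ln 2 \<le> ln (2 * real d * real k)" by (simp add: mult.assoc)
  then have "sqrt (1 / 4) \<le> sqrt (ln (2 * real d * real k))"
    using \<open>1 / 2 \<le> ln 2\<close> by (intro real_sqrt_le_mono) linarith
  then have sqrt_ln: "1 / 2 \<le> sqrt (ln (2 * real d * real k))" by (simp add: real_sqrt_divide)
  have ln: "1 / 2 \<le> ln (2 + t)"
    using \<open>1 / 2 \<le> ln 2\<close> ln_mono[of 2 "2 + t"] \<open>0 \<le> t\<close> by linarith
  have "1 \<le> sqrt (real k)" using \<open>k \<ge> 1\<close> by simp
  then have sqrt_k_ln: "1 * (1 / 2) \<le> sqrt (real k) * sqrt (ln (2 * real d * real k))"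
    using sqrt_ln by (rule mult_mono) simp_all
  then have "1 * (1 / 2) * (1 / 2) \<le> sqrt (real k) * sqrt (ln (2 * real d * real k)) * ln (2 + t)"
    using ln by (rule mult_mono) (use sqrt_k_ln in linarith)+
  then show ?thesis by simp
qed

theorem corollary1:
  "\<exists>C>0. \<forall>(n::nat) (d::nat) (k::nat) (\<phi>::real \<Rightarrow> real) (L::real) (b::real) (a::real)
      (x::nat \<Rightarrow> nat \<Rightarrow> real) (x'::nat \<Rightarrow> nat \<Rightarrow> real).
     n \<ge> 1 \<longrightarrow> d \<ge> 1 \<longrightarrow> k \<ge> 1 \<longrightarrow>
     (\<forall>s t. \<bar>\<phi> s - \<phi> t\<bar> \<le> L * \<bar>s - t\<bar>) \<longrightarrow> \<phi> 0 = 0 \<longrightarrow>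
     b > 0 \<longrightarrow> (\<forall>i<n. vnorm d (x i) \<le> b \<and> vnorm d (x' i) \<le> b) \<longrightarrow> a > 0 \<longrightarrow>
     rademacher n (F_set n d k \<phi> x x' (G_set d k a))
       \<le> C * (1 / real n + a^2 * b^2 * sqrt (real k) * L^2 / sqrt (real n)
               * sqrt (ln (2 * real d * real k)) * ln (2 + real n * b^2 * a^2 * L^2))"
proof (rule exI[of _ 32], intro conjI allI impI)
  fix n d k :: nat and \<phi> :: "real \<Rightarrow> real" and L b a :: real and x x' :: "nat \<Rightarrow> nat \<Rightarrow> real"
  assume "n \<ge> 1" "d \<ge> 1" "k \<ge> 1" and lip: "\<forall>s t. \<bar>\<phi> s - \<phi> t\<bar> \<le> L * \<bar>s - t\<bar>"
    and "\<phi> 0 = 0" "b > 0" and bound: "\<forall>i<n. vnorm d (x i) \<le> b \<and> vnorm d (x' i) \<le> b" and "a > 0"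
  define M where "M = (L * a * b)\<^sup>2 / sqrt (real n)"
  define P where "P = sqrt (real k) * sqrt (ln (2 * real d * real k)) * ln (2 + real n * b^2 * a^2 * L^2)"
  have "0 \<le> M" unfolding M_def by simp
  have "1 / 4 \<le> P"
    unfolding P_def by (rule quarter_le_log_factors) (use \<open>d \<ge> 1\<close> \<open>k \<ge> 1\<close> in auto)
  have "rademacher n (F_set n d k \<phi> x x' (G_set d k a)) \<le> 8 * M"
    using rademacher_F_set_le[OF \<open>k \<ge> 1\<close> lip \<open>\<phi> 0 = 0\<close> _ _ bound] \<open>a > 0\<close> \<open>b > 0\<close>
    unfolding M_def by simp
  also have "\<dots> \<le> 32 * (M * P)"
    using mult_left_mono[OF \<open>1 / 4 \<le> P\<close> \<open>0 \<le> M\<close>] by simp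
  also have "\<dots> \<le> 32 * (1 / real n + M * P)"
    by simp
  also have "M * P = a^2 * b^2 * sqrt (real k) * L^2 / sqrt (real n)
      * sqrt (ln (2 * real d * real k)) * ln (2 + real n * b^2 * a^2 * L^2)"
    unfolding M_def P_def by (simp add: power_mult_distrib mult_ac)
  finally show "rademacher n (F_set n d k \<phi> x x' (G_set d k a))
       \<le> 32 * (1 / real n + a^2 * b^2 * sqrt (real k) * L^2 / sqrt (real n)
               * sqrt (ln (2 * real d * real k)) * ln (2 + real n * b^2 * a^2 * L^2))" .
qed simp

end
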